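(* Let $x_0\in\mathbb{R}\cup\{+\infty\}$, $T<x_0$, $I:=[T,x_0)$, and let $\phi_1,\phi_2\in AC^1(I)$ satisfy $\phi_2(x)=o(\phi_1(x))$ as $x\to x_0$, $\phi_1(x)\neq0$, $\phi_2(x)\neq0$ and $W(x):=W(\phi_1,\phi_2;x)\neq0$ for all $x\in I$. Let $\phi\in\mathrm{span}(\phi_1,\phi_2)$ be strictly positive on a left-sided neighborhood $J\subset I$ of $x_0$, and consider the factorization $$L[u]=\frac{W(x)}{\phi(x)}\Big[\frac{\phi(x)^2}{W(x)}\Big(\frac{u}{\phi(x)}\Big)'\Big]'\quad\text{on }J.$$ This factorization is canonical of type (I) at $x_0$ (i.e. $\int^{x_0}W(t)\phi(t)^{-2}\,dt$ diverges) if and only if $\phi(x)\sim c\,\phi_2(x)$ as $x\to x_0$ for some constant $c\neq0$; and it is canonical of type (II) at $x_0$ (i.e. $\int^{x_0}W(t)\phi(t)^{-2}\,dt$ converges) if and only if $\phi(x)\sim c\,\phi_1(x)$ as $x\to x_0$ for some constant $c\neq0$. Moreover $\phi(x)\sim c\,\phi_2(x)$ as $x\to x_0$ occurs if and only if $\phi\equiv c\,\phi_2$ on $I$; hence on a fixed left-sided neighborhood of $x_0$ there is, up to constant factors, only one canonical factorization of type (I) at $x_0$.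
   Context: $AC^1(I)$: $C^1$ functions on $I$ whose derivative is absolutely continuous on every compact subinterval of $I$. $W(g,h;x):=g(x)h'(x)-g'(x)h(x)$. $L$ is the unique operator $L[u]=u''+a_1(x)u'+a_2(x)u$ with locally integrable coefficients whose kernel is $\mathrm{span}(\phi_1,\phi_2)$. A factorization $L[u]=p_2[p_1(p_0u)']'$ with nowhere-vanishing $p_i$ is called canonical of type (I), resp. type (II), at $x_0$ according as $\int^{x_0}1/p_1$ diverges, resp. converges; in the displayed factorization $p_1=\phi^2/W$. Limits are as $x\to x_0^-$. *)

theory Defs
  imports "HOL-Analysis.Analysis" "HOL-Library.Landau_Symbols"
begin

definition abs_cont_on :: "real set \<Rightarrow> (real \<Rightarrow> real) \<Rightarrow> bool" where
  "abs_cont_on S f \<longleftrightarrow>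
     (\<forall>\<epsilon>>0. \<exists>\<delta>>0. \<forall>(n::nat) (a::nat\<Rightarrow>real) (b::nat\<Rightarrow>real).
        (\<forall>i<n. a i \<le> b i \<and> {a i..b i} \<subseteq> S) \<and>
        (\<forall>i<n. \<forall>j<n. i \<noteq> j \<longrightarrow> {a i<..<b i} \<inter> {a j<..<b j} = {}) \<and>
        (\<Sum>i<n. b i - a i) < \<delta>
        \<longrightarrow> (\<Sum>i<n. \<bar>f (b i) - f (a i)\<bar>) < \<epsilon>)"

definition AC1_on :: "real set \<Rightarrow> (real \<Rightarrow> real) \<Rightarrow> (real \<Rightarrow> real) \<Rightarrow> bool" where
  "AC1_on I f f' \<longleftrightarrow>
     (\<forall>x\<in>I. (f has_real_derivative f' x) (at x within I)) \<and>
     continuous_on I f' \<and>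
     (\<forall>a b. {a..b} \<subseteq> I \<longrightarrow> abs_cont_on {a..b} f')"

definition wronskian :: "(real \<Rightarrow> real) \<Rightarrow> (real \<Rightarrow> real) \<Rightarrow> (real \<Rightarrow> real) \<Rightarrow> (real \<Rightarrow> real) \<Rightarrow> real \<Rightarrow> real" where
  "wronskian g g' h h' x = g x * h' x - g' x * h x"

definition left_filter :: "ereal \<Rightarrow> real filter" where
  "left_filter x0 = (if x0 = PInfty then at_top else at_left (real_of_ereal x0))"

definition improper_conv :: "(real \<Rightarrow> real) \<Rightarrow> real \<Rightarrow> ereal \<Rightarrow> bool" where
  "improper_conv f S x0 \<longleftrightarrow>
     (\<exists>l. ((\<lambda>x. integral {S..x} f) \<longlongrightarrow> l) (left_filter x0))"

(* canonical factorization type at x0, in terms of the middle coefficient p1 *)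
definition canonical_type_I :: "(real \<Rightarrow> real) \<Rightarrow> real \<Rightarrow> ereal \<Rightarrow> bool" where
  "canonical_type_I p1 S x0 \<longleftrightarrow> \<not> improper_conv (\<lambda>t. 1 / p1 t) S x0"

definition canonical_type_II :: "(real \<Rightarrow> real) \<Rightarrow> real \<Rightarrow> ereal \<Rightarrow> bool" where
  "canonical_type_II p1 S x0 \<longleftrightarrow> improper_conv (\<lambda>t. 1 / p1 t) S x0"

end

theory Submission
  imports Defs
begin

text \<open>
  With \<open>\<phi> = a \<phi>\<^sub>1 + b \<phi>\<^sub>2\<close>, the integrand \<open>W/\<phi>\<^sup>2\<close> has the explicit antiderivatives
  \<open>(\<phi>\<^sub>2/\<phi>)/a\<close> (if \<open>a \<noteq> 0\<close>) and \<open>-(\<phi>\<^sub>1/\<phi>)/b\<close> (if \<open>a = 0\<close>), since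
  \<open>W(\<phi>, \<phi>\<^sub>2) = a W\<close> and \<open>W(\<phi>, \<phi>\<^sub>1) = -b W\<close>. Because \<open>\<phi>\<^sub>2 = o(\<phi>\<^sub>1)\<close>, the first tends to \<open>0\<close>
  while the second has no finite limit. So the factorization is of type (II) exactly when
  \<open>a \<noteq> 0\<close>, i.e. when \<open>\<phi> \<sim> a \<phi>\<^sub>1\<close>, and of type (I) exactly when \<open>\<phi> = b \<phi>\<^sub>2\<close>; the same
  little-o relation shows that \<open>\<phi>\<close> can be asymptotic to a multiple of \<open>\<phi>\<^sub>2\<close> only in the
  latter case.
\<close>

lemma smallo_not_asymp_equiv:
  fixes f g :: "'a \<Rightarrow> real"
  assumes "F \<noteq> bot" and f: "eventually (\<lambda>x. f x \<noteq> 0) F"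
    and "g \<in> o[F](f)" and "c \<noteq> 0"
  shows "\<not> g \<sim>[F] (\<lambda>x. c * f x)"
proof
  assume equiv: "g \<sim>[F] (\<lambda>x. c * f x)"
  then have "f \<in> O[F](g)"
    using \<open>c \<noteq> 0\<close> asymp_equiv_imp_bigo[of "\<lambda>x. c * f x" F g] by (simp add: asymp_equiv_sym)
  with \<open>g \<in> o[F](f)\<close> have "eventually (\<lambda>x. g x = 0) F"
    by (rule landau_o.small_big_asymmetric)
  with asymp_equiv_eventually_zeros[OF equiv] f have "eventually (\<lambda>x. False) F"
    by eventually_elim (use \<open>c \<noteq> 0\<close> in simp)
  with \<open>F \<noteq> bot\<close> show False
    by simp
qed

lemma asymp_equiv_cmult_iff:
  fixes f :: "'a \<Rightarrow> real"
  assumes "F \<noteq> bot" and f: "eventually (\<lambda>x. f x \<noteq> 0) F" and "c \<noteq> 0"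
  shows "(\<lambda>x. b * f x) \<sim>[F] (\<lambda>x. c * f x) \<longleftrightarrow> b = c"
proof
  assume "(\<lambda>x. b * f x) \<sim>[F] (\<lambda>x. c * f x)"
  then have "(\<lambda>x. (b - c) * f x) \<in> o[F](f)"
    using asymp_equiv_imp_diff_smallo \<open>c \<noteq> 0\<close> by (fastforce simp: algebra_simps)
  moreover have "f \<notin> o[F](f)"
  proof
    assume "f \<in> o[F](f)"
    with f have "eventually (\<lambda>x. False) F"
      unfolding landau_o.small_refl_iff by eventually_elim simp
    with \<open>F \<noteq> bot\<close> show False
      by simp
  qed
  ultimately show "b = c"
    by simp
qed simp

lemma smallo_lincomb_asymp_equiv:
  fixes f g :: "'a \<Rightarrow> real"
  assumes "g \<in> o[F](f)" and "a \<noteq> 0"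
  shows "(\<lambda>x. a * f x + b * g x) \<sim>[F] (\<lambda>x. a * f x)"
  using assms by (subst asymp_equiv_add_right) auto

lemma smallo_lincomb_asymp_equiv_first_iff:
  fixes f g :: "'a \<Rightarrow> real"
  assumes "F \<noteq> bot" and f: "eventually (\<lambda>x. f x \<noteq> 0) F"
    and small: "g \<in> o[F](f)" and "c \<noteq> 0"
  shows "(\<lambda>x. a * f x + b * g x) \<sim>[F] (\<lambda>x. c * f x) \<longleftrightarrow> a = c"
proof
  assume equiv: "(\<lambda>x. a * f x + b * g x) \<sim>[F] (\<lambda>x. c * f x)"
  show "a = c"
  proof (cases "a = 0")
    case True
    with equiv smallo_not_asymp_equiv[OF \<open>F \<noteq> bot\<close> f _ \<open>c \<noteq> 0\<close>, of "\<lambda>x. b * g x"] small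
    show ?thesis by simp
  next
    case False
    have "(\<lambda>x. a * f x) \<sim>[F] (\<lambda>x. a * f x + b * g x)"
      using smallo_lincomb_asymp_equiv[OF small False] by (simp add: asymp_equiv_sym)
    also note equiv
    finally have "(\<lambda>x. a * f x) \<sim>[F] (\<lambda>x. c * f x)" .
    with asymp_equiv_cmult_iff[OF \<open>F \<noteq> bot\<close> f \<open>c \<noteq> 0\<close>] show ?thesis by simp
  qed
qed (use assms smallo_lincomb_asymp_equiv in auto)

lemma smallo_lincomb_asymp_equiv_second_iff:
  fixes f g :: "'a \<Rightarrow> real"
  assumes "F \<noteq> bot" and f: "eventually (\<lambda>x. f x \<noteq> 0) F" and g: "eventually (\<lambda>x. g x \<noteq> 0) F"
    and small: "g \<in> o[F](f)" and "c \<noteq> 0"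
  shows "(\<lambda>x. a * f x + b * g x) \<sim>[F] (\<lambda>x. c * g x) \<longleftrightarrow> a = 0 \<and> b = c"
proof
  assume equiv: "(\<lambda>x. a * f x + b * g x) \<sim>[F] (\<lambda>x. c * g x)"
  have "a = 0"
  proof (rule ccontr)
    assume "a \<noteq> 0"
    have "(\<lambda>x. c * g x) \<sim>[F] (\<lambda>x. a * f x + b * g x)"
      using equiv by (simp add: asymp_equiv_sym)
    also have "\<dots> \<sim>[F] (\<lambda>x. a * f x)"
      by (rule smallo_lincomb_asymp_equiv[OF small \<open>a \<noteq> 0\<close>])
    finally have "(\<lambda>x. c * g x) \<sim>[F] (\<lambda>x. a * f x)" .
    with smallo_not_asymp_equiv[OF \<open>F \<noteq> bot\<close> f _ \<open>a \<noteq> 0\<close>, of "\<lambda>x. c * g x"] small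
    show False by simp
  qed
  with equiv asymp_equiv_cmult_iff[OF \<open>F \<noteq> bot\<close> g \<open>c \<noteq> 0\<close>] show "a = 0 \<and> b = c"
    by simp
qed simp

lemma smallo_lincomb_quotient_tendsto_0:
  fixes f g :: "'a \<Rightarrow> real"
  assumes "g \<in> o[F](f)" and "a \<noteq> 0"
  shows "((\<lambda>x. g x / (a * f x + b * g x)) \<longlongrightarrow> 0) F"
proof -
  have "(\<lambda>x. a * f x) \<in> O[F](\<lambda>x. a * f x + b * g x)"
    using smallo_lincomb_asymp_equiv[OF assms]
    by (intro asymp_equiv_imp_bigo) (simp add: asymp_equiv_sym)
  then have "f \<in> O[F](\<lambda>x. a * f x + b * g x)"
    using \<open>a \<noteq> 0\<close> by simp
  with \<open>g \<in> o[F](f)\<close> have "g \<in> o[F](\<lambda>x. a * f x + b * g x)"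
    by (rule landau_o.small_big_trans)
  then show ?thesis
    by (rule smalloD_tendsto)
qed

lemma smallo_quotient_not_tendsto:
  fixes f g :: "'a \<Rightarrow> real"
  assumes "F \<noteq> bot" and g: "eventually (\<lambda>x. g x \<noteq> 0) F" and "g \<in> o[F](f)"
  shows "\<not> ((\<lambda>x. f x / g x) \<longlongrightarrow> l) F"
proof
  assume "((\<lambda>x. f x / g x) \<longlongrightarrow> l) F"
  with g have "f \<in> O[F](g)"
    by (intro bigoI_tendsto)
  with \<open>g \<in> o[F](f)\<close> have "eventually (\<lambda>x. g x = 0) F"
    by (rule landau_o.small_big_asymmetric)
  with g have "eventually (\<lambda>x. False) F"
    by eventually_elim simp
  with \<open>F \<noteq> bot\<close> show False
    by simp
qed

lemma left_filter_neq_bot: "ereal T < x0 \<Longrightarrow> left_filter x0 \<noteq> bot"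
  by (cases x0) (auto simp: left_filter_def)

lemma eventually_left_filter_interval:
  assumes "ereal S < x0"
  shows "eventually (\<lambda>x. S \<le> x \<and> ereal x < x0) (left_filter x0)"
proof (cases x0)
  case (real r)
  with assms have "eventually (\<lambda>x. x \<in> {S<..<r}) (at_left r)"
    by (intro eventually_at_left_real) simp
  then show ?thesis
    using real by (auto simp: left_filter_def elim!: eventually_mono)
qed (use assms in \<open>auto simp: left_filter_def intro: eventually_ge_at_top\<close>)

lemma improper_conv_iff_antiderivative_tendsto:
  fixes f G :: "real \<Rightarrow> real" and S :: real and x0 :: ereal
  defines "J \<equiv> {x. S \<le> x \<and> ereal x < x0}"
  assumes "ereal S < x0"
    and G: "\<And>t. t \<in> J \<Longrightarrow> (G has_real_derivative f t) (at t within J)"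
  shows "improper_conv f S x0 \<longleftrightarrow> (\<exists>l. (G \<longlongrightarrow> l) (left_filter x0))"
proof -
  have sub: "{S..y} \<subseteq> J" if "y \<in> J" for y
    using that by (auto simp: J_def intro: le_less_trans[of _ "ereal y"])
  have "(G has_real_derivative f t) (at t within {S..y})" if "y \<in> J" "t \<in> {S..y}" for y t
    using sub[OF that(1)] that(2) by (meson G has_field_derivative_subset subsetD)
  then have integral: "integral {S..y} f = G y - G S" if "y \<in> J" for y
    using that
    by (intro integral_unique fundamental_theorem_of_calculus)
      (auto simp: J_def has_real_derivative_iff_has_vector_derivative)
  have "eventually (\<lambda>y. integral {S..y} f = G y - G S) (left_filter x0)"
    using eventually_left_filter_interval[OF assms(2)]
    by (rule eventually_mono) (simp add: integral J_def)
  then have "((\<lambda>y. integral {S..y} f) \<longlongrightarrow> l - G S) (left_filter x0) \<longleftrightarrow>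
             (G \<longlongrightarrow> l) (left_filter x0)" for l
    using tendsto_add_const_iff[of "- G S" G l] by (simp add: tendsto_cong)
  then show ?thesis
    unfolding improper_conv_def by (metis add_diff_cancel_right')
qed

lemma has_real_derivative_divide_wronskian:
  assumes "(g has_real_derivative g' x) (at x within s)"
    and "(h has_real_derivative h' x) (at x within s)" and "h x \<noteq> 0"
  shows "((\<lambda>t. g t / h t) has_real_derivative wronskian h h' g g' x / h x ^ 2) (at x within s)"
  using DERIV_quotient[OF assms] by (simp add: wronskian_def power2_eq_square algebra_simps)

lemma wronskian_lincomb:
  "wronskian (\<lambda>x. a * f x + b * g x) (\<lambda>x. a * f' x + b * g' x) g g' x = a * wronskian f f' g g' x"
  "wronskian (\<lambda>x. a * f x + b * g x) (\<lambda>x. a * f' x + b * g' x) f f' x = - b * wronskian f f' g g' x"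
  by (simp_all add: wronskian_def algebra_simps)

lemma has_real_derivative_quotients_lincomb:
  assumes d1: "(\<phi>1 has_real_derivative \<phi>1' t) (at t within s)"
    and d2: "(\<phi>2 has_real_derivative \<phi>2' t) (at t within s)"
    and nz: "a * \<phi>1 t + b * \<phi>2 t \<noteq> 0"
  shows "((\<lambda>x. \<phi>2 x / (a * \<phi>1 x + b * \<phi>2 x)) has_real_derivative
            a * wronskian \<phi>1 \<phi>1' \<phi>2 \<phi>2' t / (a * \<phi>1 t + b * \<phi>2 t) ^ 2) (at t within s)"
    and "((\<lambda>x. \<phi>1 x / (a * \<phi>1 x + b * \<phi>2 x)) has_real_derivative
            - b * wronskian \<phi>1 \<phi>1' \<phi>2 \<phi>2' t / (a * \<phi>1 t + b * \<phi>2 t) ^ 2) (at t within s)"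
proof -
  let ?\<phi>' = "\<lambda>x. a * \<phi>1' x + b * \<phi>2' x"
  have d\<phi>: "((\<lambda>x. a * \<phi>1 x + b * \<phi>2 x) has_real_derivative ?\<phi>' t) (at t within s)"
    using d1 d2 by (auto intro!: derivative_eq_intros)
  show "((\<lambda>x. \<phi>2 x / (a * \<phi>1 x + b * \<phi>2 x)) has_real_derivative
          a * wronskian \<phi>1 \<phi>1' \<phi>2 \<phi>2' t / (a * \<phi>1 t + b * \<phi>2 t) ^ 2) (at t within s)"
    using has_real_derivative_divide_wronskian[where g' = \<phi>2' and h' = ?\<phi>', OF d2 d\<phi> nz]
    by (simp only: wronskian_lincomb)
  show "((\<lambda>x. \<phi>1 x / (a * \<phi>1 x + b * \<phi>2 x)) has_real_derivative
          - b * wronskian \<phi>1 \<phi>1' \<phi>2 \<phi>2' t / (a * \<phi>1 t + b * \<phi>2 t) ^ 2) (at t within s)"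
    using has_real_derivative_divide_wronskian[where g' = \<phi>1' and h' = ?\<phi>', OF d1 d\<phi> nz]
    by (simp only: wronskian_lincomb)
qed

lemma canonical_type_II_lincomb_iff:
  fixes \<phi>1 \<phi>1' \<phi>2 \<phi>2' :: "real \<Rightarrow> real" and x0 :: ereal and S a b :: real
  defines "J \<equiv> {x. S \<le> x \<and> ereal x < x0}"
    and "\<phi> \<equiv> \<lambda>x. a * \<phi>1 x + b * \<phi>2 x"
    and "W \<equiv> wronskian \<phi>1 \<phi>1' \<phi>2 \<phi>2'"
  assumes S_lt: "ereal S < x0"
    and d1: "\<And>x. x \<in> J \<Longrightarrow> (\<phi>1 has_real_derivative \<phi>1' x) (at x within J)"
    and d2: "\<And>x. x \<in> J \<Longrightarrow> (\<phi>2 has_real_derivative \<phi>2' x) (at x within J)"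
    and small: "\<phi>2 \<in> o[left_filter x0](\<phi>1)"
    and nz: "\<forall>x\<in>J. \<phi> x \<noteq> 0"
  shows "canonical_type_II (\<lambda>x. \<phi> x ^ 2 / W x) S x0 \<longleftrightarrow> a \<noteq> 0"
proof -
  have quotient:
    "((\<lambda>x. \<phi>2 x / \<phi> x) has_real_derivative a * W t / \<phi> t ^ 2) (at t within J)"
    "((\<lambda>x. \<phi>1 x / \<phi> x) has_real_derivative - b * W t / \<phi> t ^ 2) (at t within J)"
    if "t \<in> J" for t
    using has_real_derivative_quotients_lincomb[where \<phi>1' = \<phi>1' and \<phi>2' = \<phi>2' and a = a and b = b,
        OF d1[OF that] d2[OF that]] nz that
    unfolding \<phi>_def W_def by auto
  have antiderivative: "canonical_type_II (\<lambda>x. \<phi> x ^ 2 / W x) S x0 \<longleftrightarrow> (\<exists>l. (G \<longlongrightarrow> l) (left_filter x0))"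
    if "\<And>t. t \<in> J \<Longrightarrow> (G has_real_derivative W t / \<phi> t ^ 2) (at t within J)" for G
    unfolding canonical_type_II_def J_def
    by (rule improper_conv_iff_antiderivative_tendsto[OF S_lt]) (simp add: that[unfolded J_def])
  show ?thesis
  proof (cases "a = 0")
    case False
    have "((\<lambda>t. \<phi>2 t / \<phi> t / a) has_real_derivative W t / \<phi> t ^ 2) (at t within J)" if "t \<in> J" for t
      using DERIV_cdivide[OF quotient(1)[OF that], of a] False by simp
    moreover have "((\<lambda>t. \<phi>2 t / \<phi> t / a) \<longlongrightarrow> 0 / a) (left_filter x0)"
      using smallo_lincomb_quotient_tendsto_0[OF small False] False unfolding \<phi>_def
      by (intro tendsto_intros)
    ultimately show ?thesis
      using False antiderivative by blast
  next
    case True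
    then have "b \<noteq> 0" and \<phi>_eq: "\<phi> = (\<lambda>x. b * \<phi>2 x)"
      using nz S_lt by (auto simp: \<phi>_def J_def)
    have "((\<lambda>t. - (\<phi>1 t / \<phi> t) / b) has_real_derivative W t / \<phi> t ^ 2) (at t within J)" if "t \<in> J" for t
      using DERIV_cdivide[OF DERIV_minus[OF quotient(2)[OF that]], of b] \<open>b \<noteq> 0\<close> by simp
    moreover have "\<not> ((\<lambda>t. - (\<phi>1 t / \<phi> t) / b) \<longlongrightarrow> l) (left_filter x0)" for l
    proof
      assume "((\<lambda>t. - (\<phi>1 t / \<phi> t) / b) \<longlongrightarrow> l) (left_filter x0)"
      then have "((\<lambda>t. - (- (\<phi>1 t / \<phi> t) / b * b)) \<longlongrightarrow> - (l * b)) (left_filter x0)"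
        by (intro tendsto_intros)
      moreover have "eventually (\<lambda>x. \<phi> x \<noteq> 0) (left_filter x0)"
        using eventually_left_filter_interval[OF S_lt] nz by (auto simp: J_def elim: eventually_mono)
      ultimately show False
        using smallo_quotient_not_tendsto[OF left_filter_neq_bot[OF S_lt], of \<phi> \<phi>1] small \<open>b \<noteq> 0\<close>
        by (simp add: \<phi>_eq)
    qed
    ultimately show ?thesis
      using True antiderivative by blast
  qed
qed

theorem lemma3p2:
  fixes x0 :: ereal and T S :: real
    and \<phi>1 \<phi>1' \<phi>2 \<phi>2' :: "real \<Rightarrow> real" and a b :: real
  defines "I \<equiv> {x. T \<le> x \<and> ereal x < x0}"
    and "J \<equiv> {x. S \<le> x \<and> ereal x < x0}"
    and "W \<equiv> wronskian \<phi>1 \<phi>1' \<phi>2 \<phi>2'"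
    and "\<phi> \<equiv> (\<lambda>x. a * \<phi>1 x + b * \<phi>2 x)"
  assumes T_lt: "ereal T < x0"
    and ac1: "AC1_on I \<phi>1 \<phi>1'" and ac2: "AC1_on I \<phi>2 \<phi>2'"
    and small: "\<phi>2 \<in> o[left_filter x0](\<phi>1)"
    and nz1: "\<forall>x\<in>I. \<phi>1 x \<noteq> 0" and nz2: "\<forall>x\<in>I. \<phi>2 x \<noteq> 0"
    and nzW: "\<forall>x\<in>I. W x \<noteq> 0"
    and S_ge: "T \<le> S" and S_lt: "ereal S < x0"
    and pos: "\<forall>x\<in>J. \<phi> x > 0"
  shows "(canonical_type_I (\<lambda>x. \<phi> x ^ 2 / W x) S x0 \<longleftrightarrow>
            (\<exists>c. c \<noteq> 0 \<and> \<phi> \<sim>[left_filter x0] (\<lambda>x. c * \<phi>2 x)))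
       \<and> (canonical_type_II (\<lambda>x. \<phi> x ^ 2 / W x) S x0 \<longleftrightarrow>
            (\<exists>c. c \<noteq> 0 \<and> \<phi> \<sim>[left_filter x0] (\<lambda>x. c * \<phi>1 x)))
       \<and> (\<forall>c. c \<noteq> 0 \<longrightarrow>
            (\<phi> \<sim>[left_filter x0] (\<lambda>x. c * \<phi>2 x) \<longleftrightarrow> (\<forall>x\<in>I. \<phi> x = c * \<phi>2 x)))
       \<and> (\<forall>a' b'. (\<forall>x\<in>J. a' * \<phi>1 x + b' * \<phi>2 x > 0)
            \<longrightarrow> canonical_type_I (\<lambda>x. \<phi> x ^ 2 / W x) S x0
            \<longrightarrow> canonical_type_I (\<lambda>x. (a' * \<phi>1 x + b' * \<phi>2 x) ^ 2 / W x) S x0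
            \<longrightarrow> (\<exists>k. k \<noteq> 0 \<and> (\<forall>x\<in>J. a' * \<phi>1 x + b' * \<phi>2 x = k * \<phi> x)))"
proof -
  define F where "F = left_filter x0"
  have "J \<subseteq> I"
    using S_ge by (auto simp: I_def J_def)
  have "F \<noteq> bot" and ev_I: "eventually (\<lambda>x. x \<in> I) F"
    using left_filter_neq_bot[OF T_lt] eventually_left_filter_interval[OF T_lt]
    by (simp_all add: F_def I_def)
  then have ev_nz: "eventually (\<lambda>x. \<phi>1 x \<noteq> 0) F" "eventually (\<lambda>x. \<phi>2 x \<noteq> 0) F"
    using nz1 nz2 by (auto elim!: eventually_mono)
  have "(\<phi>1 has_real_derivative \<phi>1' x) (at x within J)"
    and "(\<phi>2 has_real_derivative \<phi>2' x) (at x within J)" if "x \<in> J" for x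
    using that \<open>J \<subseteq> I\<close> ac1 ac2 unfolding AC1_on_def by (auto intro: has_field_derivative_subset)
  note type_II = canonical_type_II_lincomb_iff[OF S_lt this[unfolded J_def] small, folded J_def W_def]
  have type_I: "canonical_type_I (\<lambda>x. (a' * \<phi>1 x + b' * \<phi>2 x) ^ 2 / W x) S x0 \<longleftrightarrow> a' = 0"
    if "\<forall>x\<in>J. a' * \<phi>1 x + b' * \<phi>2 x > 0" for a' b'
    using type_II[of a' b'] that unfolding canonical_type_I_def canonical_type_II_def by force
  have equiv_\<phi>1: "\<phi> \<sim>[F] (\<lambda>x. c * \<phi>1 x) \<longleftrightarrow> a = c"
    and equiv_\<phi>2: "\<phi> \<sim>[F] (\<lambda>x. c * \<phi>2 x) \<longleftrightarrow> a = 0 \<and> b = c" if "c \<noteq> 0" for c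
    unfolding \<phi>_def F_def
    using smallo_lincomb_asymp_equiv_first_iff smallo_lincomb_asymp_equiv_second_iff
      \<open>F \<noteq> bot\<close> ev_nz small that by (simp_all add: F_def)
  have b_nz: "a = 0 \<Longrightarrow> b \<noteq> 0"
    using pos S_lt by (auto simp: \<phi>_def J_def)
  have \<phi>_type_I: "canonical_type_I (\<lambda>x. \<phi> x ^ 2 / W x) S x0 \<longleftrightarrow> a = 0"
    using type_I pos unfolding \<phi>_def by blast
  show ?thesis
  proof (intro conjI allI impI)
    show "canonical_type_I (\<lambda>x. \<phi> x ^ 2 / W x) S x0 \<longleftrightarrow>
          (\<exists>c. c \<noteq> 0 \<and> \<phi> \<sim>[left_filter x0] (\<lambda>x. c * \<phi>2 x))"
      using \<phi>_type_I equiv_\<phi>2 b_nz unfolding F_def by blast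
    show "canonical_type_II (\<lambda>x. \<phi> x ^ 2 / W x) S x0 \<longleftrightarrow>
          (\<exists>c. c \<noteq> 0 \<and> \<phi> \<sim>[left_filter x0] (\<lambda>x. c * \<phi>1 x))"
      using \<phi>_type_I equiv_\<phi>1 unfolding canonical_type_I_def canonical_type_II_def F_def by blast
    show "\<phi> \<sim>[left_filter x0] (\<lambda>x. c * \<phi>2 x) \<longleftrightarrow> (\<forall>x\<in>I. \<phi> x = c * \<phi>2 x)" if "c \<noteq> 0" for c
      using equiv_\<phi>2[OF that] ev_I unfolding F_def
      by (auto simp: \<phi>_def intro!: asymp_equiv_refl_ev elim!: eventually_mono)
    fix a' b' assume pos': "\<forall>x\<in>J. a' * \<phi>1 x + b' * \<phi>2 x > 0"
      and "canonical_type_I (\<lambda>x. \<phi> x ^ 2 / W x) S x0"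
      and "canonical_type_I (\<lambda>x. (a' * \<phi>1 x + b' * \<phi>2 x) ^ 2 / W x) S x0"
    then have "a = 0" "a' = 0" "b' \<noteq> 0"
      using \<phi>_type_I type_I S_lt by (auto simp: J_def)
    with b_nz show "\<exists>k. k \<noteq> 0 \<and> (\<forall>x\<in>J. a' * \<phi>1 x + b' * \<phi>2 x = k * \<phi> x)"
      by (intro exI[of _ "b' / b"]) (simp add: \<phi>_def)
  qed
qed

end
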